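(* Let $(H,G,t,\Phi)$ be a crossed module of Lie groups and let $\mathcal{B}_1:H\to H$, $\mathcal{B}_0:G\to G$ be smooth maps. Put $$\mathrm{Gr}(\mathcal{B}_1)=\{(\mathcal{B}_1(p),p)\mid p\in H\}\subset H\ltimes H,\qquad \mathrm{Gr}(\mathcal{B}_0)=\{(\mathcal{B}_0(a),a)\mid a\in G\}\subset G\ltimes G.$$ Then $(\mathcal{B}_1,\mathcal{B}_0)$ is a Rota-Baxter operator on $(H,G,t,\Phi)$ if and only if $\mathrm{Gr}(\mathcal{B}_1)$ and $\mathrm{Gr}(\mathcal{B}_0)$ are Lie subgroups of $H\ltimes H$ and $G\ltimes G$ respectively, the map $(t,t)(p,q)=(t(p),t(q))$ restricts to a Lie group homomorphism $\mathrm{Gr}(\mathcal{B}_1)\to\mathrm{Gr}(\mathcal{B}_0)$ (i.e. $(t(\mathcal{B}_1(p)),t(p))\in \mathrm{Gr}(\mathcal{B}_0)$), the action $\tilde\Phi$ restricts to an action of $\mathrm{Gr}(\mathcal{B}_0)$ on $\mathrm{Gr}(\mathcal{B}_1)$ by automorphisms, namely $$\tilde{\Phi}\big((\mathcal{B}_0(a),a)\big)(\mathcal{B}_1(p),p)=\Big(\Phi(\mathcal{B}_0(a))\mathcal{B}_1(p),\ \Phi(a\mathcal{B}_0(a))(p\mathcal{B}_1(p))\cdot\Phi(\mathcal{B}_0(a))\mathcal{B}_1(p)^{-1}\Big)\in\mathrm{Gr}(\mathcal{B}_1),$$ and $(\mathrm{Gr}(\mathcal{B}_1),\mathrm{Gr}(\mathcal{B}_0),(t,t),\tilde\Phi)$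 is a crossed module of Lie groups.
   Context: A crossed module of Lie groups is a quadruple $(H,G,t,\Phi)$ where $H,G$ are Lie groups, $t:H\to G$ is a Lie group homomorphism and $\Phi:G\to\mathrm{Aut}(H)$ is a smooth action of $G$ on $H$ by automorphisms such that $\Phi(t(p))q=pqp^{-1}$ and $t(\Phi(a)p)=a\,t(p)\,a^{-1}$ for all $p,q\in H$, $a\in G$. A Rota-Baxter operator on a Lie group $G$ is a smooth map $\mathcal{B}:G\to G$ with $\mathcal{B}(a)\mathcal{B}(b)=\mathcal{B}(a\mathcal{B}(a)b\mathcal{B}(a)^{-1})$ for all $a,b\in G$. A Rota-Baxter operator on a crossed module of Lie groups $(H,G,t,\Phi)$ is a pair $(\mathcal{B}_1,\mathcal{B}_0)$ of smooth maps $\mathcal{B}_1:H\to H$, $\mathcal{B}_0:G\to G$ such that (i) $\mathcal{B}_1,\mathcal{B}_0$ are Rota-Baxter operators on $H$, $G$; (ii) $t\circ\mathcal{B}_1=\mathcal{B}_0\circ t$; (iii) $\Phi(\mathcal{B}_0(a))\mathcal{B}_1(p)=\mathcal{B}_1\big(\Phi(a\mathcal{B}_0(a))(p\mathcal{B}_1(p))\cdot\Phi(\mathcal{B}_0(a))\mathcal{B}_1(p)^{-1}\big)$ for all $a\in G,p\in H$. $G\ltimes G$ denotes $G\times G$ with product $(a,b)(c,d)=(ac,\ b\,a\,d\,a^{-1})$, and similarly $H\ltimes H$ with $(p,q)(r,s)=(pr,\ q\,p\,s\,p^{-1})$. The map $\tilde\Phi:G\ltimes G\to\mathrm{Aut}(H\ltimes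 H)$ is $\tilde{\Phi}((a,b))(p,q)=\big(\Phi(a)p,\ \Phi(ba)(qp)\cdot\Phi(a)p^{-1}\big)$; it is known that $(H\ltimes H,G\ltimes G,(t,t),\tilde\Phi)$ is a crossed module of Lie groups. *)

theory Defs
  imports "HOL-Algebra.Group"
begin

(* Lie groups are modelled by their underlying (HOL-Algebra) groups. *)

text \<open>Phi : G -> Aut(H), a left action by automorphisms, given pointwise as a
function of two arguments; only its values on carriers matter.\<close>
definition action_by_aut ::
  "('g, 'b) monoid_scheme \<Rightarrow> ('h, 'a) monoid_scheme \<Rightarrow> ('g \<Rightarrow> 'h \<Rightarrow> 'h) \<Rightarrow> bool" where
  "action_by_aut G H Phi \<longleftrightarrow>
     (\<forall>a\<in>carrier G. Phi a \<in> hom H H \<and> bij_betw (Phi a) (carrier H) (carrier H)) \<and>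
     (\<forall>a\<in>carrier G. \<forall>b\<in>carrier G. \<forall>p\<in>carrier H.
        Phi (a \<otimes>\<^bsub>G\<^esub> b) p = Phi a (Phi b p))"

definition crossed_module ::
  "('h, 'a) monoid_scheme \<Rightarrow> ('g, 'b) monoid_scheme \<Rightarrow> ('h \<Rightarrow> 'g) \<Rightarrow> ('g \<Rightarrow> 'h \<Rightarrow> 'h) \<Rightarrow> bool" where
  "crossed_module H G t Phi \<longleftrightarrow>
     group H \<and> group G \<and> t \<in> hom H G \<and> action_by_aut G H Phi \<and>
     (\<forall>p\<in>carrier H. \<forall>q\<in>carrier H.
        Phi (t p) q = p \<otimes>\<^bsub>H\<^esub> q \<otimes>\<^bsub>H\<^esub> inv\<^bsub>H\<^esub> p) \<and>
     (\<forall>a\<in>carrier G. \<forall>p\<in>carrier H.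
        t (Phi a p) = a \<otimes>\<^bsub>G\<^esub> t p \<otimes>\<^bsub>G\<^esub> inv\<^bsub>G\<^esub> a)"

definition rota_baxter :: "('g, 'b) monoid_scheme \<Rightarrow> ('g \<Rightarrow> 'g) \<Rightarrow> bool" where
  "rota_baxter G B \<longleftrightarrow> B \<in> carrier G \<rightarrow> carrier G \<and>
     (\<forall>a\<in>carrier G. \<forall>b\<in>carrier G.
        B a \<otimes>\<^bsub>G\<^esub> B b = B (a \<otimes>\<^bsub>G\<^esub> B a \<otimes>\<^bsub>G\<^esub> b \<otimes>\<^bsub>G\<^esub> inv\<^bsub>G\<^esub> (B a)))"

definition rota_baxter_cm ::
  "('h, 'a) monoid_scheme \<Rightarrow> ('g, 'b) monoid_scheme \<Rightarrow> ('h \<Rightarrow> 'g) \<Rightarrow> ('g \<Rightarrow> 'h \<Rightarrow> 'h)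
     \<Rightarrow> ('h \<Rightarrow> 'h) \<Rightarrow> ('g \<Rightarrow> 'g) \<Rightarrow> bool" where
  "rota_baxter_cm H G t Phi B1 B0 \<longleftrightarrow>
     rota_baxter H B1 \<and> rota_baxter G B0 \<and>
     (\<forall>p\<in>carrier H. t (B1 p) = B0 (t p)) \<and>
     (\<forall>a\<in>carrier G. \<forall>p\<in>carrier H.
        Phi (B0 a) (B1 p) =
          B1 (Phi (a \<otimes>\<^bsub>G\<^esub> B0 a) (p \<otimes>\<^bsub>H\<^esub> B1 p) \<otimes>\<^bsub>H\<^esub> inv\<^bsub>H\<^esub> (Phi (B0 a) (B1 p))))"

definition sdprod :: "('g, 'b) monoid_scheme \<Rightarrow> ('g \<times> 'g) monoid" where
  "sdprod G = \<lparr>carrier = carrier G \<times> carrier G,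
     mult = (\<lambda>x y. (fst x \<otimes>\<^bsub>G\<^esub> fst y,
                    snd x \<otimes>\<^bsub>G\<^esub> fst x \<otimes>\<^bsub>G\<^esub> snd y \<otimes>\<^bsub>G\<^esub> inv\<^bsub>G\<^esub> (fst x))),
     one = (\<one>\<^bsub>G\<^esub>, \<one>\<^bsub>G\<^esub>)\<rparr>"

definition Phi_tilde ::
  "('h, 'a) monoid_scheme \<Rightarrow> ('g, 'b) monoid_scheme \<Rightarrow> ('g \<Rightarrow> 'h \<Rightarrow> 'h)
     \<Rightarrow> 'g \<times> 'g \<Rightarrow> 'h \<times> 'h \<Rightarrow> 'h \<times> 'h" where
  "Phi_tilde H G Phi x y =
     (Phi (fst x) (fst y),
      Phi (snd x \<otimes>\<^bsub>G\<^esub> fst x) (snd y \<otimes>\<^bsub>H\<^esub> fst y) \<otimes>\<^bsub>H\<^esub> inv\<^bsub>H\<^esub> (Phi (fst x) (fst y)))"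

definition tt :: "('h \<Rightarrow> 'g) \<Rightarrow> 'h \<times> 'h \<Rightarrow> 'g \<times> 'g" where
  "tt t x = (t (fst x), t (snd x))"

definition graph_op :: "('g, 'b) monoid_scheme \<Rightarrow> ('g \<Rightarrow> 'g) \<Rightarrow> ('g \<times> 'g) set" where
  "graph_op G B = (\<lambda>a. (B a, a)) ` carrier G"

end

theory Submission
  imports Defs
begin

text \<open>The graph of \<open>B\<close> is closed under the product of \<open>G \<ltimes> G\<close> exactly when \<open>B\<close> satisfies the
Rota-Baxter identity: \<open>(B a, a)(B b, b) = (B a B b, a B a b (B a)\<^sup>-\<^sup>1)\<close>. Likewise the compatibility
conditions (ii) and (iii) say precisely that \<open>(t,t)\<close> maps \<open>Gr(B\<^sub>1)\<close> into \<open>Gr(B\<^sub>0)\<close> and that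
\<open>\<tilde>\<Phi>\<close> maps \<open>Gr(B\<^sub>0) \<times> Gr(B\<^sub>1)\<close> into \<open>Gr(B\<^sub>1)\<close>. The remaining structure is then inherited: any pair of
subgroups of a crossed module that is stable under the boundary map and the action is again a
crossed module, and \<open>(H \<ltimes> H, G \<ltimes> G, (t,t), \<tilde>\<Phi>)\<close> is a crossed module.\<close>

lemma (in group) inv_mult_cancel_left [simp]:
  "a \<in> carrier G \<Longrightarrow> x \<in> carrier G \<Longrightarrow> inv a \<otimes> (a \<otimes> x) = x"
  by (simp add: m_assoc[symmetric])

lemma (in group) mult_inv_cancel_left [simp]:
  "a \<in> carrier G \<Longrightarrow> x \<in> carrier G \<Longrightarrow> a \<otimes> (inv a \<otimes> x) = x"
  by (simp add: m_assoc[symmetric])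

lemma sdprod_carrier [simp]: "carrier (sdprod G) = carrier G \<times> carrier G"
  by (simp add: sdprod_def)

lemma sdprod_mult [simp]:
  "(a, b) \<otimes>\<^bsub>sdprod G\<^esub> (c, d) = (a \<otimes>\<^bsub>G\<^esub> c, b \<otimes>\<^bsub>G\<^esub> a \<otimes>\<^bsub>G\<^esub> d \<otimes>\<^bsub>G\<^esub> inv\<^bsub>G\<^esub> a)"
  by (simp add: sdprod_def)

lemma sdprod_one [simp]: "\<one>\<^bsub>sdprod G\<^esub> = (\<one>\<^bsub>G\<^esub>, \<one>\<^bsub>G\<^esub>)"
  by (simp add: sdprod_def)

lemma group_sdprod:
  assumes "group G"
  shows "group (sdprod G)"
proof -
  interpret G: group G by fact
  show ?thesis
  proof (rule groupI)
    fix x y z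
    assume "x \<in> carrier (sdprod G)" "y \<in> carrier (sdprod G)" "z \<in> carrier (sdprod G)"
    then show "x \<otimes>\<^bsub>sdprod G\<^esub> y \<otimes>\<^bsub>sdprod G\<^esub> z = x \<otimes>\<^bsub>sdprod G\<^esub> (y \<otimes>\<^bsub>sdprod G\<^esub> z)"
      by (cases x, cases y, cases z) (simp add: G.m_assoc G.inv_mult_group)
  next
    fix x
    assume "x \<in> carrier (sdprod G)"
    then obtain a b where x: "x = (a, b)" "a \<in> carrier G" "b \<in> carrier G" by auto
    show "\<exists>y\<in>carrier (sdprod G). y \<otimes>\<^bsub>sdprod G\<^esub> x = \<one>\<^bsub>sdprod G\<^esub>"
      by (rule bexI[of _ "(inv\<^bsub>G\<^esub> a, inv\<^bsub>G\<^esub> a \<otimes>\<^bsub>G\<^esub> inv\<^bsub>G\<^esub> b \<otimes>\<^bsub>G\<^esub> a)"])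
        (use x in \<open>simp_all add: G.m_assoc\<close>)
  qed auto
qed

lemma sdprod_inv:
  assumes "group G" "a \<in> carrier G" "b \<in> carrier G"
  shows "inv\<^bsub>sdprod G\<^esub> (a, b) = (inv\<^bsub>G\<^esub> a, inv\<^bsub>G\<^esub> a \<otimes>\<^bsub>G\<^esub> inv\<^bsub>G\<^esub> b \<otimes>\<^bsub>G\<^esub> a)"
proof -
  interpret G: group G by fact
  interpret S: group "sdprod G" using assms(1) by (rule group_sdprod)
  show ?thesis
    by (rule S.inv_equality) (use assms in \<open>simp_all add: G.m_assoc\<close>)
qed

lemma graph_op_iff: "(x, a) \<in> graph_op G B \<longleftrightarrow> a \<in> carrier G \<and> x = B a"
  by (auto simp: graph_op_def)

lemma graph_op_subset:
  "B \<in> carrier G \<rightarrow> carrier G \<Longrightarrow> graph_op G B \<subseteq> carrier (sdprod G)"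
  by (auto simp: graph_op_def)

lemma rota_baxter_one:
  assumes "group G" "rota_baxter G B"
  shows "B \<one>\<^bsub>G\<^esub> = \<one>\<^bsub>G\<^esub>"
proof -
  interpret G: group G by fact
  have B1: "B \<one>\<^bsub>G\<^esub> \<in> carrier G" using assms(2) by (auto simp: rota_baxter_def)
  have "B \<one>\<^bsub>G\<^esub> \<otimes>\<^bsub>G\<^esub> B \<one>\<^bsub>G\<^esub> = B \<one>\<^bsub>G\<^esub> \<otimes>\<^bsub>G\<^esub> \<one>\<^bsub>G\<^esub>"
    using assms(2) B1 by (auto simp: rota_baxter_def)
  then show ?thesis using B1 by simp
qed

text \<open>The inverse of \<open>(B a, a)\<close> in \<open>G \<ltimes> G\<close> is \<open>(B c, c)\<close> for \<open>c = (B a)\<^sup>-\<^sup>1 a\<^sup>-\<^sup>1 B a\<close>, because the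
Rota-Baxter identity for \<open>a\<close> and \<open>c\<close> reads \<open>B a B c = B \<one>\<close>.\<close>

lemma rota_baxter_graph_inv:
  assumes "group G" "rota_baxter G B" "a \<in> carrier G"
  shows "inv\<^bsub>sdprod G\<^esub> (B a, a) \<in> graph_op G B"
proof -
  interpret G: group G by fact
  have Bc: "\<And>x. x \<in> carrier G \<Longrightarrow> B x \<in> carrier G" using assms(2) by (auto simp: rota_baxter_def)
  define c where "c = inv\<^bsub>G\<^esub> B a \<otimes>\<^bsub>G\<^esub> inv\<^bsub>G\<^esub> a \<otimes>\<^bsub>G\<^esub> B a"
  have c: "c \<in> carrier G" using assms(3) Bc by (simp add: c_def)
  have "B a \<otimes>\<^bsub>G\<^esub> B c = B (a \<otimes>\<^bsub>G\<^esub> B a \<otimes>\<^bsub>G\<^esub> c \<otimes>\<^bsub>G\<^esub> inv\<^bsub>G\<^esub> B a)"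
    using assms(2,3) c by (simp add: rota_baxter_def)
  also have "\<dots> = \<one>\<^bsub>G\<^esub>"
    using assms Bc rota_baxter_one[OF assms(1,2)] by (simp add: c_def G.m_assoc)
  finally have "B c = inv\<^bsub>G\<^esub> B a"
    using Bc assms(3) c by (metis G.inv_equality G.inv_inv G.inv_closed)
  then have "inv\<^bsub>sdprod G\<^esub> (B a, a) = (B c, c)"
    using assms Bc by (simp add: sdprod_inv c_def)
  then show ?thesis using c by (simp add: graph_op_iff)
qed

lemma subgroup_graph_op_iff:
  assumes "group G" "B \<in> carrier G \<rightarrow> carrier G"
  shows "subgroup (graph_op G B) (sdprod G) \<longleftrightarrow> rota_baxter G B"
proof
  assume sg: "subgroup (graph_op G B) (sdprod G)"
  have "B a \<otimes>\<^bsub>G\<^esub> B b = B (a \<otimes>\<^bsub>G\<^esub> B a \<otimes>\<^bsub>G\<^esub> b \<otimes>\<^bsub>G\<^esub> inv\<^bsub>G\<^esub> B a)"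
    if "a \<in> carrier G" "b \<in> carrier G" for a b
  proof -
    have "(B a, a) \<otimes>\<^bsub>sdprod G\<^esub> (B b, b) \<in> graph_op G B"
      using that by (intro subgroup.m_closed[OF sg]) (simp_all add: graph_op_iff)
    then show ?thesis by (simp add: graph_op_iff)
  qed
  then show "rota_baxter G B" using assms(2) by (simp add: rota_baxter_def)
next
  assume rb: "rota_baxter G B"
  interpret G: group G by fact
  interpret S: group "sdprod G" using assms(1) by (rule group_sdprod)
  show "subgroup (graph_op G B) (sdprod G)"
  proof (rule S.subgroupI)
    show "graph_op G B \<subseteq> carrier (sdprod G)" using assms(2) by (rule graph_op_subset)
    show "graph_op G B \<noteq> {}" using group.is_monoid[OF assms(1)] by (auto simp: graph_op_def)
  next
    fix x
    assume "x \<in> graph_op G B"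
    then show "inv\<^bsub>sdprod G\<^esub> x \<in> graph_op G B"
      using rota_baxter_graph_inv[OF assms(1) rb] by (auto simp: graph_op_def)
  next
    fix x y
    assume "x \<in> graph_op G B" "y \<in> graph_op G B"
    then obtain a b where "x = (B a, a)" "y = (B b, b)" "a \<in> carrier G" "b \<in> carrier G"
      by (auto simp: graph_op_def)
    then show "x \<otimes>\<^bsub>sdprod G\<^esub> y \<in> graph_op G B"
      using rb assms(2) by (auto simp: graph_op_iff rota_baxter_def Pi_iff)
  qed
qed

lemma action_by_autI:
  assumes "group G"
    and hom: "\<And>a. a \<in> carrier G \<Longrightarrow> Phi a \<in> hom H H"
    and one: "\<And>p. p \<in> carrier H \<Longrightarrow> Phi \<one>\<^bsub>G\<^esub> p = p"
    and comp: "\<And>a b p. a \<in> carrier G \<Longrightarrow> b \<in> carrier G \<Longrightarrow> p \<in> carrier H \<Longrightarrow>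
                 Phi (a \<otimes>\<^bsub>G\<^esub> b) p = Phi a (Phi b p)"
  shows "action_by_aut G H Phi"
proof -
  interpret G: group G by fact
  have closed: "Phi a p \<in> carrier H" if "a \<in> carrier G" "p \<in> carrier H" for a p
    using hom[OF that(1)] that(2) by (auto simp: hom_def)
  have cancel: "Phi (inv\<^bsub>G\<^esub> a) (Phi a p) = p" if "a \<in> carrier G" "p \<in> carrier H" for a p
    using comp[of "inv\<^bsub>G\<^esub> a" a p] one that by simp
  have "bij_betw (Phi a) (carrier H) (carrier H)" if "a \<in> carrier G" for a
    using that G.inv_inv[OF that] cancel[of "inv\<^bsub>G\<^esub> a"]
    by (intro bij_betw_byWitness[where f' = "Phi (inv\<^bsub>G\<^esub> a)"])
       (auto simp: cancel closed)
  then show ?thesis using hom comp by (simp add: action_by_aut_def)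
qed

lemma action_by_aut_one:
  assumes "monoid G" "action_by_aut G H Phi" "p \<in> carrier H"
  shows "Phi \<one>\<^bsub>G\<^esub> p = p"
proof -
  have "inj_on (Phi \<one>\<^bsub>G\<^esub>) (carrier H)" and Phi1: "Phi \<one>\<^bsub>G\<^esub> \<in> carrier H \<rightarrow> carrier H"
    using assms(1,2) by (auto simp: action_by_aut_def bij_betw_def hom_def)
  moreover have "Phi \<one>\<^bsub>G\<^esub> (Phi \<one>\<^bsub>G\<^esub> p) = Phi \<one>\<^bsub>G\<^esub> p"
    using assms by (auto simp: action_by_aut_def dest: bspec[of _ _ "\<one>\<^bsub>G\<^esub>"])
  ultimately show ?thesis using assms(3) by (auto dest: inj_onD)
qed

lemma crossed_module_restrict:
  assumes cm: "crossed_module H G t Phi"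
    and K: "subgroup K H" and L: "subgroup L G"
    and t_K: "\<And>p. p \<in> K \<Longrightarrow> t p \<in> L"
    and Phi_K: "\<And>a p. a \<in> L \<Longrightarrow> p \<in> K \<Longrightarrow> Phi a p \<in> K"
  shows "crossed_module (H\<lparr>carrier := K\<rparr>) (G\<lparr>carrier := L\<rparr>) t Phi"
proof -
  interpret H: group H using cm by (simp add: crossed_module_def)
  interpret G: group G using cm by (simp add: crossed_module_def)
  have act: "action_by_aut G H Phi" using cm by (simp add: crossed_module_def)
  have K_H: "p \<in> K \<Longrightarrow> p \<in> carrier H" for p using subgroup.subset[OF K] by blast
  have L_G: "a \<in> L \<Longrightarrow> a \<in> carrier G" for a using subgroup.subset[OF L] by blast
  have "t \<in> hom (H\<lparr>carrier := K\<rparr>) (G\<lparr>carrier := L\<rparr>)"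
    using cm K_H t_K by (auto simp: crossed_module_def hom_def)
  moreover have "action_by_aut (G\<lparr>carrier := L\<rparr>) (H\<lparr>carrier := K\<rparr>) Phi"
  proof (rule action_by_autI)
    show "group (G\<lparr>carrier := L\<rparr>)" using L by (rule G.subgroup_imp_group)
    show "Phi a \<in> hom (H\<lparr>carrier := K\<rparr>) (H\<lparr>carrier := K\<rparr>)" if "a \<in> carrier (G\<lparr>carrier := L\<rparr>)" for a
      using that act L_G K_H Phi_K by (auto simp: action_by_aut_def hom_def)
    show "Phi \<one>\<^bsub>G\<lparr>carrier := L\<rparr>\<^esub> p = p" if "p \<in> carrier (H\<lparr>carrier := K\<rparr>)" for p
      using that action_by_aut_one[OF G.is_monoid act] K_H by simp
  qed (use act L_G K_H in \<open>simp add: action_by_aut_def\<close>)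
  moreover have "inv\<^bsub>H\<lparr>carrier := K\<rparr>\<^esub> p = inv\<^bsub>H\<^esub> p" if "p \<in> K" for p
    using H.m_inv_consistent[OF K that] .
  moreover have "inv\<^bsub>G\<lparr>carrier := L\<rparr>\<^esub> a = inv\<^bsub>G\<^esub> a" if "a \<in> L" for a
    using G.m_inv_consistent[OF L that] .
  ultimately show ?thesis
    using cm H.subgroup_imp_group[OF K] G.subgroup_imp_group[OF L] K_H L_G t_K
    by (simp add: crossed_module_def)
qed

locale xmod =
  fixes H :: "('h, 'a) monoid_scheme" and G :: "('g, 'b) monoid_scheme"
    and t :: "'h \<Rightarrow> 'g" and Phi :: "'g \<Rightarrow> 'h \<Rightarrow> 'h"
  assumes crossed_module: "crossed_module H G t Phi"
begin

sublocale H: group H using crossed_module by (simp add: crossed_module_def)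
sublocale G: group G using crossed_module by (simp add: crossed_module_def)
sublocale t: group_hom H G t
  using crossed_module by (simp add: crossed_module_def group_hom_def group_hom_axioms_def)

lemma action: "action_by_aut G H Phi"
  using crossed_module by (simp add: crossed_module_def)

lemma Phi_hom: "a \<in> carrier G \<Longrightarrow> group_hom H H (Phi a)"
  using action by (simp add: action_by_aut_def group_hom_def group_hom_axioms_def H.group_axioms)

lemma Phi_closed [simp]: "a \<in> carrier G \<Longrightarrow> p \<in> carrier H \<Longrightarrow> Phi a p \<in> carrier H"
  using group_hom.hom_closed[OF Phi_hom] .

lemma Phi_mult [simp]:
  "a \<in> carrier G \<Longrightarrow> p \<in> carrier H \<Longrightarrow> q \<in> carrier H \<Longrightarrow>
    Phi a (p \<otimes>\<^bsub>H\<^esub> q) = Phi a p \<otimes>\<^bsub>H\<^esub> Phi a q"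
  using group_hom.hom_mult[OF Phi_hom] .

lemma Phi_inv [simp]: "a \<in> carrier G \<Longrightarrow> p \<in> carrier H \<Longrightarrow> Phi a (inv\<^bsub>H\<^esub> p) = inv\<^bsub>H\<^esub> (Phi a p)"
  using group_hom.hom_inv[OF Phi_hom] .

lemma Phi_comp [simp]:
  "a \<in> carrier G \<Longrightarrow> b \<in> carrier G \<Longrightarrow> p \<in> carrier H \<Longrightarrow> Phi (a \<otimes>\<^bsub>G\<^esub> b) p = Phi a (Phi b p)"
  using action by (simp add: action_by_aut_def)

lemma Phi_one [simp]: "p \<in> carrier H \<Longrightarrow> Phi \<one>\<^bsub>G\<^esub> p = p"
  using action_by_aut_one[OF G.is_monoid action] .

lemma Phi_boundary [simp]:
  "p \<in> carrier H \<Longrightarrow> q \<in> carrier H \<Longrightarrow> Phi (t p) q = p \<otimes>\<^bsub>H\<^esub> q \<otimes>\<^bsub>H\<^esub> inv\<^bsub>H\<^esub> p"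
  using crossed_module by (simp add: crossed_module_def)

lemma boundary_Phi [simp]:
  "a \<in> carrier G \<Longrightarrow> p \<in> carrier H \<Longrightarrow> t (Phi a p) = a \<otimes>\<^bsub>G\<^esub> t p \<otimes>\<^bsub>G\<^esub> inv\<^bsub>G\<^esub> a"
  using crossed_module by (simp add: crossed_module_def)

lemmas group_simps = H.m_assoc G.m_assoc H.inv_mult_group G.inv_mult_group

lemma crossed_module_sdprod: "crossed_module (sdprod H) (sdprod G) (tt t) (Phi_tilde H G Phi)"
proof -
  have "tt t \<in> hom (sdprod H) (sdprod G)"
    by (rule homI) (auto simp: tt_def)
  moreover have "action_by_aut (sdprod G) (sdprod H) (Phi_tilde H G Phi)"
  proof (rule action_by_autI)
    show "group (sdprod G)" using G.group_axioms by (rule group_sdprod)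
    show "Phi_tilde H G Phi x \<in> hom (sdprod H) (sdprod H)" if "x \<in> carrier (sdprod G)" for x
      using that by (intro homI) (auto simp: Phi_tilde_def group_simps)
  qed (auto simp: Phi_tilde_def group_simps)
  ultimately show ?thesis
    using group_sdprod[OF H.group_axioms] group_sdprod[OF G.group_axioms]
    by (auto simp: crossed_module_def Phi_tilde_def tt_def group_simps
                   sdprod_inv[OF H.group_axioms] sdprod_inv[OF G.group_axioms])
qed

lemma tt_graph_op_iff:
  "p \<in> carrier H \<Longrightarrow> tt t (B1 p, p) \<in> graph_op G B0 \<longleftrightarrow> t (B1 p) = B0 (t p)"
  by (auto simp: tt_def graph_op_iff)

lemma Phi_tilde_graph_op_iff:
  assumes "B1 \<in> carrier H \<rightarrow> carrier H" "B0 \<in> carrier G \<rightarrow> carrier G"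
    and "a \<in> carrier G" "p \<in> carrier H"
  shows "Phi_tilde H G Phi (B0 a, a) (B1 p, p) \<in> graph_op H B1 \<longleftrightarrow>
    Phi (B0 a) (B1 p) =
      B1 (Phi (a \<otimes>\<^bsub>G\<^esub> B0 a) (p \<otimes>\<^bsub>H\<^esub> B1 p) \<otimes>\<^bsub>H\<^esub> inv\<^bsub>H\<^esub> (Phi (B0 a) (B1 p)))"
proof -
  have "B0 a \<in> carrier G" "B1 p \<in> carrier H" using assms by auto
  then show ?thesis using assms(3,4) by (auto simp: Phi_tilde_def graph_op_iff)
qed

end

theorem theorem2p4:
  fixes H :: "('h, 'a) monoid_scheme" and G :: "('g, 'b) monoid_scheme"
    and t :: "'h \<Rightarrow> 'g" and Phi :: "'g \<Rightarrow> 'h \<Rightarrow> 'h"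
    and B1 :: "'h \<Rightarrow> 'h" and B0 :: "'g \<Rightarrow> 'g"
  assumes "crossed_module H G t Phi"
    and "B1 \<in> carrier H \<rightarrow> carrier H"
    and "B0 \<in> carrier G \<rightarrow> carrier G"
  shows "rota_baxter_cm H G t Phi B1 B0 \<longleftrightarrow>
    (subgroup (graph_op H B1) (sdprod H) \<and>
     subgroup (graph_op G B0) (sdprod G) \<and>
     (\<forall>p\<in>carrier H. tt t (B1 p, p) \<in> graph_op G B0) \<and>
     tt t \<in> hom ((sdprod H)\<lparr>carrier := graph_op H B1\<rparr>) ((sdprod G)\<lparr>carrier := graph_op G B0\<rparr>) \<and>
     (\<forall>a\<in>carrier G. \<forall>p\<in>carrier H.
        Phi_tilde H G Phi (B0 a, a) (B1 p, p) \<in> graph_op H B1) \<and>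
     action_by_aut ((sdprod G)\<lparr>carrier := graph_op G B0\<rparr>)
                   ((sdprod H)\<lparr>carrier := graph_op H B1\<rparr>) (Phi_tilde H G Phi) \<and>
     crossed_module ((sdprod H)\<lparr>carrier := graph_op H B1\<rparr>)
                    ((sdprod G)\<lparr>carrier := graph_op G B0\<rparr>) (tt t) (Phi_tilde H G Phi))"
proof -
  interpret xmod H G t Phi by (rule xmod.intro) (rule assms(1))
  let ?GrH = "graph_op H B1" and ?GrG = "graph_op G B0"
  have conditions: "rota_baxter_cm H G t Phi B1 B0 \<longleftrightarrow>
      subgroup ?GrH (sdprod H) \<and> subgroup ?GrG (sdprod G) \<and>
      (\<forall>p\<in>carrier H. tt t (B1 p, p) \<in> ?GrG) \<and>
      (\<forall>a\<in>carrier G. \<forall>p\<in>carrier H. Phi_tilde H G Phi (B0 a, a) (B1 p, p) \<in> ?GrH)"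
    using assms(2,3)
    by (simp add: rota_baxter_cm_def subgroup_graph_op_iff tt_graph_op_iff Phi_tilde_graph_op_iff)
  have "crossed_module ((sdprod H)\<lparr>carrier := ?GrH\<rparr>) ((sdprod G)\<lparr>carrier := ?GrG\<rparr>)
          (tt t) (Phi_tilde H G Phi)"
    if "subgroup ?GrH (sdprod H)" "subgroup ?GrG (sdprod G)"
      "\<forall>p\<in>carrier H. tt t (B1 p, p) \<in> ?GrG"
      "\<forall>a\<in>carrier G. \<forall>p\<in>carrier H. Phi_tilde H G Phi (B0 a, a) (B1 p, p) \<in> ?GrH"
    using crossed_module_restrict[OF crossed_module_sdprod that(1,2)] that(3,4)
    by (auto simp: graph_op_def)
  then show ?thesis
    using conditions by (auto simp: crossed_module_def)
qed

end
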